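(* The hypothesis-variant problem is GI-hard. This problem takes as input two finite sets of constant-free rules (hypotheses) $h_1,h_2$ and asks whether $h_1$ and $h_2$ are hypothesis-variants of each other.
   Context: A rule $r$ has the form $h\leftarrow p_1,\dots,p_n$, where $h,p_1,\dots,p_n$ are literals. Here $head(r)=h$ and $body(r)=\{p_1,\dots,p_n\}$. We write $vars(l)$ for the variables of a literal $l$. We set $head\_vars(r)=vars(head(r))$ and $body\_vars(r)=\bigcup_{l\in body(r)}vars(l)$. The body-only variables of $r$ are $body\_vars(r)\setminus head\_vars(r)$. A rule $r'$ is a body-variant of a rule $r$ if there is a bijective renaming $\sigma$ from the body-only variables of $r$ to the body-only variables of $r'$, extended by the identity on all other variables, such that $r\sigma=r'$. A hypothesis is a finite set of rules. A hypothesis $h'$ is a variant of a hypothesis $h$ if there is a bijection $f$ from the rules of $h'$ to the rules of $h$ such that every $r\in h'$ is a body-variant of $f(r)$. Two hypotheses are hypothesis-variants of each other if each is a variant of the other. A problem is GI-hard if graph isomorphism for finite undirected graphs is polynomial-time reducible to it. *)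

theory Defs
  imports Main
begin

text \<open>Variables and predicate symbols are natural numbers. A literal is a predicate
symbol applied to a list of variables; there are no constants, so every rule built
from these literals is constant-free.\<close>

datatype lit = Lit (pred: nat) (args: "nat list")

datatype rule = Rule (head: lit) (body: "lit set")

definition vars :: "lit \<Rightarrow> nat set" where
  "vars l = set (args l)"

definition head_vars :: "rule \<Rightarrow> nat set" where
  "head_vars r = vars (head r)"

definition body_vars :: "rule \<Rightarrow> nat set" where
  "body_vars r = (\<Union>l\<in>body r. vars l)"

definition body_only_vars :: "rule \<Rightarrow> nat set" where
  "body_only_vars r = body_vars r - head_vars r"

definition lit_rename :: "(nat \<Rightarrow> nat) \<Rightarrow> lit \<Rightarrow> lit" where
  "lit_rename \<sigma> l = Lit (pred l) (map \<sigma> (args l))"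

definition rule_rename :: "(nat \<Rightarrow> nat) \<Rightarrow> rule \<Rightarrow> rule" where
  "rule_rename \<sigma> r = Rule (lit_rename \<sigma> (head r)) (lit_rename \<sigma> ` body r)"

definition is_body_variant :: "rule \<Rightarrow> rule \<Rightarrow> bool" where
  "is_body_variant r' r \<longleftrightarrow>
     (\<exists>\<sigma>. bij_betw \<sigma> (body_only_vars r) (body_only_vars r') \<and>
          rule_rename (\<lambda>x. if x \<in> body_only_vars r then \<sigma> x else x) r = r')"

definition is_hyp_variant :: "rule set \<Rightarrow> rule set \<Rightarrow> bool" where
  "is_hyp_variant h' h \<longleftrightarrow>
     (\<exists>f. bij_betw f h' h \<and> (\<forall>r\<in>h'. is_body_variant r (f r)))"

definition hyp_variants :: "rule set \<Rightarrow> rule set \<Rightarrow> bool" where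
  "hyp_variants h1 h2 \<longleftrightarrow> is_hyp_variant h1 h2 \<and> is_hyp_variant h2 h1"

text \<open>A graph code (n, es) denotes the graph with vertex set {0..<n} and edge set
{{u,v} | (u,v) in es}; valid codes have endpoints < n and no loops.\<close>

type_synonym graph_code = "nat \<times> (nat \<times> nat) list"

definition valid_graph :: "graph_code \<Rightarrow> bool" where
  "valid_graph g \<longleftrightarrow> (\<forall>(u,v)\<in>set (snd g). u < fst g \<and> v < fst g \<and> u \<noteq> v)"

definition edges :: "graph_code \<Rightarrow> nat set set" where
  "edges g = {{u, v} | u v. (u, v) \<in> set (snd g)}"

definition graph_iso :: "graph_code \<Rightarrow> graph_code \<Rightarrow> bool" where
  "graph_iso g1 g2 \<longleftrightarrow>
     (\<exists>f. bij_betw f {..<fst g1} {..<fst g2} \<and>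
          (\<forall>u<fst g1. \<forall>v<fst g1. {u, v} \<in> edges g1 \<longleftrightarrow> {f u, f v} \<in> edges g2))"

datatype obj = N nat | L "obj list"

text \<open>Words over the alphabet {1,2,3,4} (0 is the blank): naturals in unary.\<close>
fun enc :: "obj \<Rightarrow> nat list" where
  "enc (N n) = replicate n 1 @ [2]"
| "enc (L xs) = 3 # concat (map enc xs) @ [4]"

definition graph_obj :: "graph_code \<Rightarrow> obj" where
  "graph_obj g = L [N (fst g), L (map (\<lambda>(u,v). L [N u, N v]) (snd g))]"

definition lit_obj :: "lit \<Rightarrow> obj" where
  "lit_obj l = L [N (pred l), L (map N (args l))]"

type_synonym rule_code = "lit \<times> lit list"

definition to_rule :: "rule_code \<Rightarrow> rule" where
  "to_rule rc = Rule (fst rc) (set (snd rc))"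

definition rule_obj :: "rule_code \<Rightarrow> obj" where
  "rule_obj rc = L [lit_obj (fst rc), L (map lit_obj (snd rc))]"

definition hyp_obj :: "rule_code list \<Rightarrow> obj" where
  "hyp_obj rs = L (map rule_obj rs)"

definition to_hyp :: "rule_code list \<Rightarrow> rule set" where
  "to_hyp rs = to_rule ` set rs"

datatype dir = Lft | Rgt | Stay

text \<open>States are 0..<nstates (0 = start, 1 = halt), symbols 0..<nsyms (0 = blank).\<close>
record tm =
  nstates :: nat
  nsyms :: nat
  delta :: "nat \<Rightarrow> nat \<Rightarrow> nat \<times> nat \<times> dir"

definition wf_tm :: "tm \<Rightarrow> bool" where
  "wf_tm M \<longleftrightarrow> 2 \<le> nstates M \<and> 5 \<le> nsyms M \<and>
     (\<forall>q<nstates M. \<forall>a<nsyms M.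
        fst (delta M q a) < nstates M \<and> fst (snd (delta M q a)) < nsyms M)"

text \<open>Configuration: state, tape left of the head (reversed), tape from the head on.\<close>
type_synonym config = "nat \<times> nat list \<times> nat list"

definition read_sym :: "nat list \<Rightarrow> nat" where
  "read_sym xs = (case xs of [] \<Rightarrow> 0 | a # _ \<Rightarrow> a)"

definition step :: "tm \<Rightarrow> config \<Rightarrow> config" where
  "step M c = (case c of (q, ls, rs) \<Rightarrow>
     if q = 1 then (q, ls, rs) else
     (case delta M q (read_sym rs) of (q', b, d) \<Rightarrow>
       (case d of
          Stay \<Rightarrow> (q', ls, b # tl rs)
        | Rgt \<Rightarrow> (q', b # ls, tl rs)
        | Lft \<Rightarrow> (q', tl ls, read_sym ls # b # tl rs))))"

definition run :: "tm \<Rightarrow> nat \<Rightarrow> config \<Rightarrow> config" where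
  "run M t c = (step M ^^ t) c"

definition computes_within :: "tm \<Rightarrow> nat \<Rightarrow> nat list \<Rightarrow> nat list \<Rightarrow> bool" where
  "computes_within M T w out \<longleftrightarrow>
     (\<exists>t\<le>T. \<exists>ls rs. run M t (0, [], w) = (1, ls, rs) \<and> set ls \<subseteq> {0} \<and>
        (\<exists>k. rs = out @ replicate k 0))"

end

(*
  A graph on the vertices 0, ..., n - 1 is sent to the hypothesis consisting of the single rule
    p_n <- e(u, v), e(v, u)    (one pair of atoms for every edge {u, v}).
  The head has no variables, so the body-only variables are exactly the non-isolated vertices,
  and a renaming witnessing a body-variant is a bijection between the non-isolated vertices of
  the two graphs that maps edges onto edges. The head predicate p_n fixes the number of vertices,
  so such a bijection extends to an isomorphism by matching the isolated vertices arbitrarily.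

  The reduction is computed in quadratic time by a Turing machine that uses its tape as a queue:
  it repeatedly erases the first symbol of the tape contents, walks to their right end to append
  the corresponding output and walks back. Each of these O(m) queue operations costs O(m) steps
  on an input of length m. The two atoms of an edge are produced by copying the unary endpoints
  twice, marking the digits already copied.
*)

theory Submission
  imports Defs
begin

section \<open>Graphs as rules\<close>

definition edge_lits :: "nat \<times> nat \<Rightarrow> lit list" where
  "edge_lits e = (case e of (u, v) \<Rightarrow> [Lit 0 [u, v], Lit 0 [v, u]])"

definition graph_rule_code :: "graph_code \<Rightarrow> rule_code" where
  "graph_rule_code g = (Lit (fst g) [], concat (map edge_lits (snd g)))"

definition graph_rule :: "graph_code \<Rightarrow> rule" where
  "graph_rule g = to_rule (graph_rule_code g)"

definition non_isolated :: "graph_code \<Rightarrow> nat set" where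
  "non_isolated g = {u. \<exists>v. {u, v} \<in> edges g}"

lemma lit_rename_Lit [simp]: "lit_rename f (Lit p xs) = Lit p (map f xs)"
  by (simp add: lit_rename_def)

lemma head_graph_rule: "head (graph_rule g) = Lit (fst g) []"
  by (simp add: graph_rule_def graph_rule_code_def to_rule_def)

lemma mem_body_graph_rule:
  "l \<in> body (graph_rule g) \<longleftrightarrow> (\<exists>u v. l = Lit 0 [u, v] \<and> {u, v} \<in> edges g)"
  by (auto simp: graph_rule_def graph_rule_code_def to_rule_def edge_lits_def edges_def
      doubleton_eq_iff)

lemma edge_in_non_isolated:
  assumes "{u, v} \<in> edges g"
  shows "u \<in> non_isolated g" "v \<in> non_isolated g"
  using assms by (auto simp: non_isolated_def insert_commute)

lemma body_only_vars_graph_rule: "body_only_vars (graph_rule g) = non_isolated g"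
proof -
  have "body_vars (graph_rule g) = non_isolated g"
  proof
    show "body_vars (graph_rule g) \<subseteq> non_isolated g"
      by (fastforce simp: body_vars_def vars_def mem_body_graph_rule intro: edge_in_non_isolated)
    show "non_isolated g \<subseteq> body_vars (graph_rule g)"
    proof
      fix u assume "u \<in> non_isolated g"
      then obtain v where "{u, v} \<in> edges g" by (auto simp: non_isolated_def)
      then have "Lit 0 [u, v] \<in> body (graph_rule g)" by (auto simp: mem_body_graph_rule)
      then show "u \<in> body_vars (graph_rule g)" by (force simp: body_vars_def vars_def)
    qed
  qed
  moreover have "head_vars (graph_rule g) = {}"
    by (simp add: head_vars_def vars_def head_graph_rule)
  ultimately show ?thesis
    by (simp add: body_only_vars_def)
qed

lemma non_isolated_subset:
  assumes "valid_graph g"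
  shows "non_isolated g \<subseteq> {..<fst g}"
  using assms by (auto simp: valid_graph_def edges_def non_isolated_def doubleton_eq_iff)

definition iso_on_non_isolated :: "(nat \<Rightarrow> nat) \<Rightarrow> graph_code \<Rightarrow> graph_code \<Rightarrow> bool" where
  "iso_on_non_isolated \<sigma> g1 g2 \<longleftrightarrow> bij_betw \<sigma> (non_isolated g1) (non_isolated g2) \<and>
     (\<forall>u\<in>non_isolated g1. \<forall>v\<in>non_isolated g1. {u, v} \<in> edges g1 \<longleftrightarrow> {\<sigma> u, \<sigma> v} \<in> edges g2)"

lemma graph_iso_sym:
  assumes "graph_iso g1 g2"
  shows "graph_iso g2 g1"
proof -
  obtain f where f: "bij_betw f {..<fst g1} {..<fst g2}"
    and e: "\<forall>u<fst g1. \<forall>v<fst g1. {u, v} \<in> edges g1 \<longleftrightarrow> {f u, f v} \<in> edges g2"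
    using assms unfolding graph_iso_def by blast
  define f' where "f' = inv_into {..<fst g1} f"
  have f': "bij_betw f' {..<fst g2} {..<fst g1}"
    unfolding f'_def using f by (rule bij_betw_inv_into)
  have "{u, v} \<in> edges g2 \<longleftrightarrow> {f' u, f' v} \<in> edges g1" if "u < fst g2" "v < fst g2" for u v
  proof -
    have "f' u < fst g1" "f' v < fst g1"
      using f' that by (auto dest: bij_betw_apply)
    moreover have "f (f' u) = u" "f (f' v) = v"
      using f that unfolding f'_def by (auto simp: bij_betw_def f_inv_into_f)
    ultimately show ?thesis
      using e by metis
  qed
  with f' show ?thesis
    unfolding graph_iso_def by blast
qed

lemma iso_on_non_isolated_restrict:
  assumes v1: "valid_graph g1" and v2: "valid_graph g2"
    and f: "bij_betw f {..<fst g1} {..<fst g2}"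
    and e: "\<forall>u<fst g1. \<forall>v<fst g1. {u, v} \<in> edges g1 \<longleftrightarrow> {f u, f v} \<in> edges g2"
  shows "iso_on_non_isolated f g1 g2"
proof -
  have V1: "non_isolated g1 \<subseteq> {..<fst g1}" and V2: "non_isolated g2 \<subseteq> {..<fst g2}"
    using v1 v2 by (simp_all add: non_isolated_subset)
  have "f ` non_isolated g1 = non_isolated g2"
  proof
    show "f ` non_isolated g1 \<subseteq> non_isolated g2"
    proof
      fix x assume "x \<in> f ` non_isolated g1"
      then obtain u y where x: "x = f u" and uy: "{u, y} \<in> edges g1"
        by (auto simp: non_isolated_def)
      then have "u < fst g1" "y < fst g1"
        using V1 edge_in_non_isolated[OF uy] by auto
      with e uy have "{x, f y} \<in> edges g2"
        using x by blast
      then show "x \<in> non_isolated g2"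
        by (rule edge_in_non_isolated)
    qed
    show "non_isolated g2 \<subseteq> f ` non_isolated g1"
    proof
      fix x assume "x \<in> non_isolated g2"
      then obtain y where xy: "{x, y} \<in> edges g2"
        by (auto simp: non_isolated_def)
      then have "x \<in> f ` {..<fst g1}" "y \<in> f ` {..<fst g1}"
        using f V2 edge_in_non_isolated[OF xy] by (auto simp: bij_betw_def)
      then obtain u w where "u < fst g1" "w < fst g1" "x = f u" "y = f w"
        by auto
      with e xy show "x \<in> f ` non_isolated g1"
        by (auto simp: non_isolated_def)
    qed
  qed
  then have "bij_betw f (non_isolated g1) (non_isolated g2)"
    using V1 f by (auto simp: bij_betw_def intro: inj_on_subset)
  then show ?thesis
    using V1 e by (auto simp: iso_on_non_isolated_def)
qed

lemma graph_iso_extend: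
  assumes v1: "valid_graph g1" and v2: "valid_graph g2" and n: "fst g1 = fst g2"
    and iso: "iso_on_non_isolated \<sigma> g1 g2"
  shows "graph_iso g1 g2"
proof -
  define n where "n = fst g1"
  define V1 where "V1 = non_isolated g1"
  define V2 where "V2 = non_isolated g2"
  have s: "bij_betw \<sigma> V1 V2"
    and e: "\<forall>u\<in>V1. \<forall>v\<in>V1. {u, v} \<in> edges g1 \<longleftrightarrow> {\<sigma> u, \<sigma> v} \<in> edges g2"
    using iso unfolding iso_on_non_isolated_def V1_def V2_def by blast+
  have V: "V1 \<subseteq> {..<n}" "V2 \<subseteq> {..<n}"
    using non_isolated_subset[OF v1] non_isolated_subset[OF v2] n
    by (simp_all add: V1_def V2_def n_def)
  then have "card ({..<n} - V1) = card ({..<n} - V2)"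
    using bij_betw_same_card[OF s] by (simp add: card_Diff_subset finite_subset)
  then obtain h where h: "bij_betw h ({..<n} - V1) ({..<n} - V2)"
    using finite_same_card_bij by blast
  define f where "f x = (if x \<in> V1 then \<sigma> x else h x)" for x
  have "bij_betw f (V1 \<union> ({..<n} - V1)) (V2 \<union> ({..<n} - V2))"
    unfolding f_def using s h by (intro bij_betw_disjoint_Un) auto
  then have f: "bij_betw f {..<n} {..<n}"
    using V by (simp add: Un_absorb1)
  have "{u, v} \<in> edges g1 \<longleftrightarrow> {f u, f v} \<in> edges g2" if "u < n" "v < n" for u v
  proof (cases "u \<in> V1 \<and> v \<in> V1")
    case True
    then show ?thesis using e by (simp add: f_def)
  next
    case False
    then have "f u \<notin> V2 \<or> f v \<notin> V2"
      using h that by (auto simp: f_def dest: bij_betw_apply)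
    then have "{f u, f v} \<notin> edges g2"
      unfolding V2_def using edge_in_non_isolated by blast
    moreover have "{u, v} \<notin> edges g1"
      using False unfolding V1_def using edge_in_non_isolated by blast
    ultimately show ?thesis
      by blast
  qed
  with f n show ?thesis
    unfolding graph_iso_def n_def by auto
qed

lemma graph_iso_iff_iso_on_non_isolated:
  assumes "valid_graph g1" "valid_graph g2"
  shows "graph_iso g1 g2 \<longleftrightarrow> fst g1 = fst g2 \<and> (\<exists>\<sigma>. iso_on_non_isolated \<sigma> g1 g2)"
proof
  assume "graph_iso g1 g2"
  then obtain f where f: "bij_betw f {..<fst g1} {..<fst g2}"
    and "\<forall>u<fst g1. \<forall>v<fst g1. {u, v} \<in> edges g1 \<longleftrightarrow> {f u, f v} \<in> edges g2"
    unfolding graph_iso_def by blast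
  with assms have "iso_on_non_isolated f g1 g2"
    by (intro iso_on_non_isolated_restrict)
  moreover have "fst g1 = fst g2"
    using bij_betw_same_card[OF f] by simp
  ultimately show "fst g1 = fst g2 \<and> (\<exists>\<sigma>. iso_on_non_isolated \<sigma> g1 g2)"
    by blast
next
  assume "fst g1 = fst g2 \<and> (\<exists>\<sigma>. iso_on_non_isolated \<sigma> g1 g2)"
  with assms show "graph_iso g1 g2"
    using graph_iso_extend by blast
qed

lemma Rule_eq_iff: "Rule h B = r \<longleftrightarrow> h = head r \<and> B = body r"
  by (cases r) auto

lemma rule_rename_graph_rule_eq_iff:
  "rule_rename \<rho> (graph_rule g1) = graph_rule g2 \<longleftrightarrow>
     fst g1 = fst g2 \<and> lit_rename \<rho> ` body (graph_rule g1) = body (graph_rule g2)"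
  by (simp add: rule_rename_def Rule_eq_iff head_graph_rule)

lemma lit_rename_body_graph_rule:
  assumes "\<forall>x\<in>non_isolated g. \<rho> x = \<sigma> x"
  shows "lit_rename \<rho> ` body (graph_rule g) = {Lit 0 [\<sigma> u, \<sigma> v] | u v. {u, v} \<in> edges g}"
proof (intro equalityI subsetI)
  fix l assume "l \<in> lit_rename \<rho> ` body (graph_rule g)"
  then obtain u v where "l = lit_rename \<rho> (Lit 0 [u, v])" and uv: "{u, v} \<in> edges g"
    by (auto simp: mem_body_graph_rule)
  with assms edge_in_non_isolated[OF uv] show "l \<in> {Lit 0 [\<sigma> u, \<sigma> v] | u v. {u, v} \<in> edges g}"
    by auto
next
  fix l assume "l \<in> {Lit 0 [\<sigma> u, \<sigma> v] | u v. {u, v} \<in> edges g}"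
  then obtain u v where "l = Lit 0 [\<sigma> u, \<sigma> v]" and uv: "{u, v} \<in> edges g"
    by blast
  with assms edge_in_non_isolated[OF uv] have "l = lit_rename \<rho> (Lit 0 [u, v])"
    by simp
  moreover have "Lit 0 [u, v] \<in> body (graph_rule g)"
    using uv by (auto simp: mem_body_graph_rule)
  ultimately show "l \<in> lit_rename \<rho> ` body (graph_rule g)"
    by blast
qed

lemma edges_preserved_if_renamed_edges_eq:
  assumes inj: "inj_on \<sigma> (non_isolated g1)"
    and eq: "{Lit 0 [\<sigma> u, \<sigma> v] | u v. {u, v} \<in> edges g1} = body (graph_rule g2)"
  shows "\<forall>u\<in>non_isolated g1. \<forall>v\<in>non_isolated g1. {u, v} \<in> edges g1 \<longleftrightarrow> {\<sigma> u, \<sigma> v} \<in> edges g2"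
proof (intro ballI iffI)
  fix u v assume "{u, v} \<in> edges g1"
  then have "Lit 0 [\<sigma> u, \<sigma> v] \<in> {Lit 0 [\<sigma> u, \<sigma> v] | u v. {u, v} \<in> edges g1}"
    by blast
  then show "{\<sigma> u, \<sigma> v} \<in> edges g2"
    unfolding eq by (auto simp: mem_body_graph_rule)
next
  fix u v assume uv: "u \<in> non_isolated g1" "v \<in> non_isolated g1" and "{\<sigma> u, \<sigma> v} \<in> edges g2"
  then have "Lit 0 [\<sigma> u, \<sigma> v] \<in> body (graph_rule g2)"
    by (auto simp: mem_body_graph_rule)
  then obtain a b where ab: "{a, b} \<in> edges g1" "\<sigma> a = \<sigma> u" "\<sigma> b = \<sigma> v"
    unfolding eq[symmetric] by auto
  then have "a = u" "b = v"
    using inj_onD[OF inj] edge_in_non_isolated[OF ab(1)] uv by metis+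
  with ab show "{u, v} \<in> edges g1"
    by simp
qed

lemma renamed_edges_eq_if_edges_preserved:
  assumes onto: "\<sigma> ` non_isolated g1 = non_isolated g2"
    and pres: "\<forall>u\<in>non_isolated g1. \<forall>v\<in>non_isolated g1. {u, v} \<in> edges g1 \<longleftrightarrow> {\<sigma> u, \<sigma> v} \<in> edges g2"
  shows "{Lit 0 [\<sigma> u, \<sigma> v] | u v. {u, v} \<in> edges g1} = body (graph_rule g2)"
proof (intro equalityI subsetI)
  fix l assume "l \<in> {Lit 0 [\<sigma> u, \<sigma> v] | u v. {u, v} \<in> edges g1}"
  then obtain u v where l: "l = Lit 0 [\<sigma> u, \<sigma> v]" and uv: "{u, v} \<in> edges g1"
    by blast
  then have "{\<sigma> u, \<sigma> v} \<in> edges g2"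
    using pres edge_in_non_isolated[OF uv] by blast
  with l show "l \<in> body (graph_rule g2)"
    by (auto simp: mem_body_graph_rule)
next
  fix l assume "l \<in> body (graph_rule g2)"
  then obtain x y where l: "l = Lit 0 [x, y]" and xy: "{x, y} \<in> edges g2"
    by (auto simp: mem_body_graph_rule)
  then obtain u v where "u \<in> non_isolated g1" "v \<in> non_isolated g1" "x = \<sigma> u" "y = \<sigma> v"
    using onto edge_in_non_isolated[OF xy] by (metis imageE)
  with pres xy l show "l \<in> {Lit 0 [\<sigma> u, \<sigma> v] | u v. {u, v} \<in> edges g1}"
    by blast
qed

lemma body_variant_graph_rule_iff:
  "is_body_variant (graph_rule g2) (graph_rule g1) \<longleftrightarrow>
     fst g1 = fst g2 \<and> (\<exists>\<sigma>. iso_on_non_isolated \<sigma> g1 g2)"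
proof
  assume "is_body_variant (graph_rule g2) (graph_rule g1)"
  then obtain \<sigma> where bij: "bij_betw \<sigma> (non_isolated g1) (non_isolated g2)"
    and "rule_rename (\<lambda>x. if x \<in> non_isolated g1 then \<sigma> x else x) (graph_rule g1) = graph_rule g2"
    unfolding is_body_variant_def body_only_vars_graph_rule by blast
  moreover have "lit_rename (\<lambda>x. if x \<in> non_isolated g1 then \<sigma> x else x) ` body (graph_rule g1) =
      {Lit 0 [\<sigma> u, \<sigma> v] | u v. {u, v} \<in> edges g1}"
    by (rule lit_rename_body_graph_rule) simp
  ultimately have "fst g1 = fst g2"
    and eq: "{Lit 0 [\<sigma> u, \<sigma> v] | u v. {u, v} \<in> edges g1} = body (graph_rule g2)"
    by (simp_all add: rule_rename_graph_rule_eq_iff)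
  moreover have "iso_on_non_isolated \<sigma> g1 g2"
    using bij edges_preserved_if_renamed_edges_eq[OF _ eq]
    unfolding iso_on_non_isolated_def bij_betw_def by blast
  ultimately show "fst g1 = fst g2 \<and> (\<exists>\<sigma>. iso_on_non_isolated \<sigma> g1 g2)"
    by blast
next
  assume "fst g1 = fst g2 \<and> (\<exists>\<sigma>. iso_on_non_isolated \<sigma> g1 g2)"
  then obtain \<sigma> where "fst g1 = fst g2" and bij: "bij_betw \<sigma> (non_isolated g1) (non_isolated g2)"
    and pres: "\<forall>u\<in>non_isolated g1. \<forall>v\<in>non_isolated g1. {u, v} \<in> edges g1 \<longleftrightarrow> {\<sigma> u, \<sigma> v} \<in> edges g2"
    unfolding iso_on_non_isolated_def by blast
  moreover have "{Lit 0 [\<sigma> u, \<sigma> v] | u v. {u, v} \<in> edges g1} = body (graph_rule g2)"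
    using bij pres unfolding bij_betw_def by (intro renamed_edges_eq_if_edges_preserved) auto
  moreover have "lit_rename (\<lambda>x. if x \<in> non_isolated g1 then \<sigma> x else x) ` body (graph_rule g1) =
      {Lit 0 [\<sigma> u, \<sigma> v] | u v. {u, v} \<in> edges g1}"
    by (rule lit_rename_body_graph_rule) simp
  ultimately have
    "rule_rename (\<lambda>x. if x \<in> non_isolated g1 then \<sigma> x else x) (graph_rule g1) = graph_rule g2"
    by (simp add: rule_rename_graph_rule_eq_iff)
  with bij show "is_body_variant (graph_rule g2) (graph_rule g1)"
    unfolding is_body_variant_def body_only_vars_graph_rule by blast
qed

lemma graph_iso_iff_body_variant:
  assumes "valid_graph g1" "valid_graph g2"
  shows "graph_iso g1 g2 \<longleftrightarrow> is_body_variant (graph_rule g2) (graph_rule g1)"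
  using assms by (simp add: graph_iso_iff_iso_on_non_isolated body_variant_graph_rule_iff)

lemma is_hyp_variant_singleton: "is_hyp_variant {r'} {r} \<longleftrightarrow> is_body_variant r' r"
  by (auto simp: is_hyp_variant_def bij_betw_def intro: exI[of _ "\<lambda>_. r"])

lemma graph_iso_iff_hyp_variants:
  assumes "valid_graph g1" "valid_graph g2"
  shows "graph_iso g1 g2 \<longleftrightarrow> hyp_variants (to_hyp [graph_rule_code g1]) (to_hyp [graph_rule_code g2])"
proof -
  have single: "to_hyp [graph_rule_code g] = {graph_rule g}" for g
    by (simp add: to_hyp_def graph_rule_def)
  show ?thesis
    unfolding hyp_variants_def single is_hyp_variant_singleton
    using graph_iso_iff_body_variant[OF assms] graph_iso_iff_body_variant[OF assms(2,1)]
      graph_iso_sym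
    by blast
qed

section \<open>Step-bounded runs of Turing machines\<close>

(* A configuration (q, ls, xs) stands for every tape whose part from the head on is xs followed
   by blanks, so runs are compared up to trailing blanks. *)

fun pad_blanks :: "nat \<Rightarrow> config \<Rightarrow> config" where
  "pad_blanks k (q, ls, xs) = (q, ls, xs @ replicate k 0)"

definition reaches :: "tm \<Rightarrow> nat \<Rightarrow> config \<Rightarrow> config \<Rightarrow> bool" where
  "reaches M B s s' \<longleftrightarrow> (\<forall>k. \<exists>t\<le>B. \<exists>k'. run M t (pad_blanks k s) = pad_blanks k' s')"

lemma reaches_refl: "reaches M 0 s s"
  by (auto simp: reaches_def run_def)

lemma reaches_trans [trans]:
  assumes "reaches M B1 s1 s2" and "reaches M B2 s2 s3"
  shows "reaches M (B1 + B2) s1 s3"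
  unfolding reaches_def
proof
  fix k
  obtain t1 k1 where t1: "t1 \<le> B1" "run M t1 (pad_blanks k s1) = pad_blanks k1 s2"
    using assms(1) unfolding reaches_def by blast
  obtain t2 k2 where t2: "t2 \<le> B2" "run M t2 (pad_blanks k1 s2) = pad_blanks k2 s3"
    using assms(2) unfolding reaches_def by blast
  have "run M (t2 + t1) (pad_blanks k s1) = pad_blanks k2 s3"
    using t1 t2 by (simp add: run_def funpow_add)
  with t1 t2 show "\<exists>t\<le>B1 + B2. \<exists>k'. run M t (pad_blanks k s1) = pad_blanks k' s3"
    by (intro exI[of _ "t2 + t1"]) auto
qed

lemma reaches_mono: "reaches M B s s' \<Longrightarrow> B \<le> B' \<Longrightarrow> reaches M B' s s'"
  unfolding reaches_def by (meson order_trans)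

lemma reaches_step_right:
  "q \<noteq> 1 \<Longrightarrow> delta M q a = (q', b, Rgt) \<Longrightarrow> reaches M 1 (q, ls, a # xs) (q', b # ls, xs)"
  unfolding reaches_def
  by (intro allI exI[of _ 1]) (auto simp: run_def step_def read_sym_def intro!: exI)

lemma reaches_step_stay:
  "q \<noteq> 1 \<Longrightarrow> delta M q a = (q', b, Stay) \<Longrightarrow> reaches M 1 (q, ls, a # xs) (q', ls, b # xs)"
  unfolding reaches_def
  by (intro allI exI[of _ 1]) (auto simp: run_def step_def read_sym_def intro!: exI)

lemma reaches_step_left:
  "q \<noteq> 1 \<Longrightarrow> delta M q a = (q', b, Lft) \<Longrightarrow> reaches M 1 (q, x # ls, a # xs) (q', ls, x # b # xs)"
  unfolding reaches_def
  by (intro allI exI[of _ 1]) (auto simp: run_def step_def read_sym_def intro!: exI)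

lemma reaches_step_stay_blank:
  "q \<noteq> 1 \<Longrightarrow> delta M q 0 = (q', b, Stay) \<Longrightarrow> reaches M 1 (q, ls, []) (q', ls, [b])"
  unfolding reaches_def
proof
  fix k
  assume "q \<noteq> 1" "delta M q 0 = (q', b, Stay)"
  then have "run M 1 (pad_blanks k (q, ls, [])) = pad_blanks (k - 1) (q', ls, [b])"
    by (cases k) (auto simp: run_def step_def read_sym_def)
  then show "\<exists>t\<le>1. \<exists>k'. run M t (pad_blanks k (q, ls, [])) = pad_blanks k' (q', ls, [b])"
    by blast
qed

lemma reaches_scan_right:
  assumes "q \<noteq> 1" and "\<forall>y\<in>set ys. delta M q y = (q, y, Rgt)"
  shows "reaches M (length ys) (q, ls, ys @ xs) (q, rev ys @ ls, xs)"
  using assms(2)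
proof (induction ys arbitrary: ls)
  case Nil
  then show ?case by (simp add: reaches_refl)
next
  case (Cons y ys)
  have "reaches M 1 (q, ls, y # ys @ xs) (q, y # ls, ys @ xs)"
    using assms(1) Cons.prems by (intro reaches_step_right) auto
  also have "reaches M (length ys) \<dots> (q, rev ys @ y # ls, xs)"
    using Cons by auto
  finally show ?case by simp
qed

lemma reaches_erase_right:
  assumes "q \<noteq> 1" and "\<forall>y\<in>set ys. delta M q y = (q, 0, Rgt)"
  shows "reaches M (length ys) (q, ls, ys @ xs) (q, replicate (length ys) 0 @ ls, xs)"
  using assms(2)
proof (induction ys arbitrary: ls)
  case Nil
  then show ?case by (simp add: reaches_refl)
next
  case (Cons y ys)
  have "reaches M 1 (q, ls, y # ys @ xs) (q, 0 # ls, ys @ xs)"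
    using assms(1) Cons.prems by (intro reaches_step_right) auto
  also have "reaches M (length ys) \<dots> (q, replicate (length ys) 0 @ 0 # ls, xs)"
    using Cons by auto
  finally show ?case by (simp add: replicate_app_Cons_same)
qed

lemma reaches_scan_left:
  assumes "q \<noteq> 1" and "\<forall>x\<in>set ys. delta M q x = (q, x, Lft)" and "delta M q y = (q, y, Lft)"
  shows "reaches M (length ys) (q, rev ys @ ls, y # xs) (q, ls, ys @ y # xs)"
  using assms(2,3)
proof (induction ys arbitrary: y xs rule: rev_induct)
  case Nil
  then show ?case by (simp add: reaches_refl)
next
  case (snoc x ys)
  have "reaches M 1 (q, x # rev ys @ ls, y # xs) (q, rev ys @ ls, x # y # xs)"
    using assms(1) snoc.prems by (intro reaches_step_left) auto
  also have "reaches M (length ys) \<dots> (q, ls, ys @ x # y # xs)"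
    using snoc by auto
  finally show ?case by simp
qed

section \<open>A queue machine computing the reduction\<close>

(* The states below n_ctrl are control states. In state return_to c the machine walks left to
   the first blank and then enters c one cell to the right; in state append_then a c it walks
   right to the first blank, writes a there and continues as return_to c. *)

definition n_ctrl :: nat where
  "n_ctrl = 36"

definition return_to :: "nat \<Rightarrow> nat" where
  "return_to c = n_ctrl + c"

definition append_then :: "nat \<Rightarrow> nat \<Rightarrow> nat" where
  "append_then a c = 2 * n_ctrl + n_ctrl * a + c"

(* Symbols 1 to 4 are those of enc (unary digit, end of a number, opening and closing bracket);
   5, 6 and 7 mark digits that have been copied. Control state 0 starts; 2 expects a graph or the
   final bracket; 3 copies the vertex count; 4 expects the edge list; 5 expects an edge or the end
   of the edge list; 6 to 8 copy an edge (u, v), marking its digits with 5; 9 to 11 copy v and u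
   once more, re-marking them with 6 and 7; 12 erases the copied edge. The remaining control
   states append fixed symbols. *)
definition ctrl_delta :: "nat \<Rightarrow> nat \<Rightarrow> nat \<times> nat \<times> dir" where
  "ctrl_delta c x = (
    if c = 0 then (if x = 3 then (append_then 3 2, 0, Rgt) else (c, x, Stay))
    else if c = 2 then
      (if x = 3 then (append_then 3 20, 0, Rgt)
       else if x = 4 then (append_then 4 1, 0, Rgt) else (c, x, Stay))
    else if c = 3 then
      (if x = 1 then (append_then 1 3, 0, Rgt)
       else if x = 2 then (append_then 2 22, 0, Rgt) else (c, x, Stay))
    else if c = 4 then (if x = 3 then (append_then 3 5, 0, Rgt) else (c, x, Stay))
    else if c = 5 then
      (if x = 3 then (append_then 3 25, 0, Rgt)
       else if x = 4 then (append_then 4 27, 0, Rgt) else (c, x, Stay))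
    else if c = 6 then
      (if x = 5 then (6, 5, Rgt) else if x = 1 then (append_then 1 6, 5, Rgt)
       else if x = 2 then (append_then 2 7, 2, Stay) else (c, x, Stay))
    else if c = 7 then (if x = 5 then (7, 5, Rgt) else if x = 2 then (8, 2, Rgt) else (c, x, Stay))
    else if c = 8 then
      (if x = 5 then (8, 5, Rgt) else if x = 1 then (append_then 1 7, 5, Rgt)
       else if x = 2 then (append_then 2 29, 2, Stay) else (c, x, Stay))
    else if c = 9 then (if x = 5 then (9, 5, Rgt) else if x = 2 then (10, 2, Rgt) else (c, x, Stay))
    else if c = 10 then
      (if x = 6 then (10, 6, Rgt) else if x = 5 then (append_then 1 9, 6, Rgt)
       else if x = 2 then (append_then 2 11, 2, Stay) else (c, x, Stay))
    else if c = 11 then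
      (if x = 7 then (11, 7, Rgt) else if x = 5 then (append_then 1 11, 7, Rgt)
       else if x = 2 then (append_then 2 34, 2, Stay) else (c, x, Stay))
    else if c = 12 then (if x = 4 then (5, 0, Rgt) else (12, 0, Rgt))
    else if c = 28 then (if x = 4 then (append_then 4 2, 0, Rgt) else (c, x, Stay))
    else if c = 20 then (append_then 3 21, x, Stay)
    else if c = 21 then (append_then 3 3, x, Stay)
    else if c = 22 then (append_then 3 23, x, Stay)
    else if c = 23 then (append_then 4 24, x, Stay)
    else if c = 24 then (append_then 4 4, x, Stay)
    else if c = 25 then (append_then 2 26, x, Stay)
    else if c = 26 then (append_then 3 6, x, Stay)
    else if c = 27 then (append_then 4 28, x, Stay)
    else if c = 29 then (append_then 4 30, x, Stay)
    else if c = 30 then (append_then 4 31, x, Stay)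
    else if c = 31 then (append_then 3 32, x, Stay)
    else if c = 32 then (append_then 2 33, x, Stay)
    else if c = 33 then (append_then 3 9, x, Stay)
    else if c = 34 then (append_then 4 35, x, Stay)
    else if c = 35 then (append_then 4 12, x, Stay)
    else (c, x, Stay))"

definition machine_delta :: "nat \<Rightarrow> nat \<Rightarrow> nat \<times> nat \<times> dir" where
  "machine_delta q x =
    (if q < n_ctrl then ctrl_delta q x
     else if q < 2 * n_ctrl then (if x = 0 then (q - n_ctrl, 0, Rgt) else (q, x, Lft))
     else if q < 7 * n_ctrl then
       (if x = 0 then (return_to ((q - 2 * n_ctrl) mod n_ctrl), (q - 2 * n_ctrl) div n_ctrl, Stay)
        else (q, x, Rgt))
     else (q, 0, Stay))"

definition reduction_tm :: tm where
  "reduction_tm = \<lparr>nstates = 7 * n_ctrl, nsyms = 8, delta = machine_delta\<rparr>"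

lemma wf_reduction_tm: "wf_tm reduction_tm"
  by (auto simp: wf_tm_def reduction_tm_def machine_delta_def ctrl_delta_def append_then_def
      return_to_def n_ctrl_def)

lemma delta_reduction_tm [simp]: "delta reduction_tm = machine_delta"
  by (simp add: reduction_tm_def)

(* Both forms are needed because the simplifier rewrites 1 to Suc 0. *)
lemma append_then_not_halt [simp]: "append_then a c \<noteq> 1" "append_then a c \<noteq> Suc 0"
  by (simp_all add: append_then_def n_ctrl_def)

lemma return_to_not_halt [simp]: "return_to c \<noteq> 1" "return_to c \<noteq> Suc 0"
  by (simp_all add: return_to_def n_ctrl_def)

lemma machine_delta_append_then:
  "1 \<le> a \<Longrightarrow> a \<le> 4 \<Longrightarrow> c < n_ctrl \<Longrightarrow> machine_delta (append_then a c) x =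
     (if x = 0 then (return_to c, a, Stay) else (append_then a c, x, Rgt))"
  by (auto simp: machine_delta_def append_then_def return_to_def n_ctrl_def)

lemma machine_delta_return_to:
  "c < n_ctrl \<Longrightarrow> machine_delta (return_to c) x =
     (if x = 0 then (c, 0, Rgt) else (return_to c, x, Lft))"
  by (auto simp: machine_delta_def return_to_def n_ctrl_def)

lemmas ctrl_delta_simps = machine_delta_def ctrl_delta_def n_ctrl_def

lemma reaches_append_return:
  assumes c: "c < n_ctrl" and a: "1 \<le> a" "a \<le> 4"
    and nonblank: "0 \<notin> set pre" "0 \<notin> set post"
  shows "reaches reduction_tm (length pre + 2 * length post + 3)
           (append_then a c, rev pre @ 0 # z, post) (c, 0 # z, pre @ post @ [a])"
proof -
  have right: "machine_delta (append_then a c) x = (append_then a c, x, Rgt)" if "x \<noteq> 0" for x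
    using that a c by (simp add: machine_delta_append_then)
  have left: "machine_delta (return_to c) x = (return_to c, x, Lft)" if "x \<noteq> 0" for x
    using that c by (simp add: machine_delta_return_to)
  have nonblank_all: "0 \<notin> set (pre @ post @ [a])"
    using nonblank a by simp
  obtain b w where bw: "pre @ post @ [a] = b # w"
    by (cases "pre @ post @ [a]") auto
  have "\<forall>y\<in>set post. machine_delta (append_then a c) y = (append_then a c, y, Rgt)"
    using nonblank(2) right by metis
  then have "reaches reduction_tm (length post)
      (append_then a c, rev pre @ 0 # z, post) (append_then a c, rev post @ rev pre @ 0 # z, [])"
    using reaches_scan_right[of "append_then a c" post reduction_tm "rev pre @ 0 # z" "[]"] by simp
  also have "reaches reduction_tm 1 \<dots> (return_to c, rev post @ rev pre @ 0 # z, [a])"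
    using a c by (intro reaches_step_stay_blank) (simp_all add: machine_delta_append_then)
  also have "reaches reduction_tm (length (pre @ post)) \<dots> (return_to c, 0 # z, pre @ post @ [a])"
  proof -
    have "\<forall>x\<in>set (pre @ post). machine_delta (return_to c) x = (return_to c, x, Lft)"
      using nonblank_all left by (metis Un_iff set_append)
    moreover have "machine_delta (return_to c) a = (return_to c, a, Lft)"
      using a by (intro left) simp
    ultimately show ?thesis
      using reaches_scan_left[of "return_to c" "pre @ post" reduction_tm a "0 # z" "[]"] by simp
  qed
  also have "reaches reduction_tm 1 \<dots> (return_to c, z, 0 # pre @ post @ [a])"
    unfolding bw using nonblank_all left[of b] by (intro reaches_step_left) (simp_all add: bw)
  also have "reaches reduction_tm 1 \<dots> (c, 0 # z, pre @ post @ [a])"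
    using c by (intro reaches_step_right) (simp_all add: machine_delta_return_to)
  finally show ?thesis
    by (rule reaches_mono) simp
qed

definition scans :: "nat \<Rightarrow> nat list \<Rightarrow> nat \<Rightarrow> bool" where
  "scans c P c' \<longleftrightarrow> (\<forall>ls Y. reaches reduction_tm (length P) (c, ls, P @ Y) (c', rev P @ ls, Y))"

lemma scans_Nil: "scans c [] c"
  by (simp add: scans_def reaches_refl)

lemma scans_single: "c \<noteq> 1 \<Longrightarrow> machine_delta c b = (c', b, Rgt) \<Longrightarrow> scans c [b] c'"
  unfolding scans_def using reaches_step_right[of c reduction_tm b c' b] by auto

lemma scans_replicate: "c \<noteq> 1 \<Longrightarrow> machine_delta c m = (c, m, Rgt) \<Longrightarrow> scans c (replicate i m) c"
  unfolding scans_def using reaches_scan_right[of c "replicate i m" reduction_tm] by simp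

lemma scans_append:
  assumes "scans c P c1" and "scans c1 Q c2"
  shows "scans c (P @ Q) c2"
  unfolding scans_def
proof (intro allI)
  fix ls Y
  have "reaches reduction_tm (length P) (c, ls, P @ Q @ Y) (c1, rev P @ ls, Q @ Y)"
    using assms(1) unfolding scans_def by blast
  also have "reaches reduction_tm (length Q) \<dots> (c2, rev Q @ rev P @ ls, Y)"
    using assms(2) unfolding scans_def by blast
  finally show "reaches reduction_tm (length (P @ Q)) (c, ls, (P @ Q) @ Y) (c2, rev (P @ Q) @ ls, Y)"
    by simp
qed

(* queue_reaches B (c, X) (c', X'): started in control state c with the head on the first symbol
   of the tape contents X and only blanks elsewhere, the machine reaches control state c' with
   contents X' in the same position within B steps. *)
definition queue_reaches :: "nat \<Rightarrow> nat \<times> nat list \<Rightarrow> nat \<times> nat list \<Rightarrow> bool" where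
  "queue_reaches B s s' \<longleftrightarrow> (\<forall>z. set z \<subseteq> {0} \<longrightarrow>
     (\<exists>z'. set z' \<subseteq> {0} \<and> reaches reduction_tm B (fst s, 0 # z, snd s) (fst s', 0 # z', snd s')))"

lemma queue_reaches_iff:
  "queue_reaches B (c, X) (c', X') \<longleftrightarrow> (\<forall>z. set z \<subseteq> {0} \<longrightarrow>
     (\<exists>z'. set z' \<subseteq> {0} \<and> reaches reduction_tm B (c, 0 # z, X) (c', 0 # z', X')))"
  by (simp add: queue_reaches_def)

lemma queue_reaches_refl: "queue_reaches 0 s s"
  by (auto simp: queue_reaches_def intro: reaches_refl)

lemma queue_reaches_trans [trans]:
  "queue_reaches B1 s1 s2 \<Longrightarrow> queue_reaches B2 s2 s3 \<Longrightarrow> queue_reaches (B1 + B2) s1 s3"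
  unfolding queue_reaches_def by (meson reaches_trans)

lemma queue_reaches_mono: "queue_reaches B s s' \<Longrightarrow> B \<le> B' \<Longrightarrow> queue_reaches B' s s'"
  unfolding queue_reaches_def by (meson reaches_mono)

lemma reaches_pop_push:
  assumes "c \<noteq> 1" "machine_delta c x = (append_then a c', 0, Rgt)" "c' < n_ctrl" "1 \<le> a" "a \<le> 4"
    and "0 \<notin> set X" "length X < n"
  shows "reaches reduction_tm (2 * n + 10) (c, ls, x # X) (c', 0 # ls, X @ [a])"
proof -
  have "reaches reduction_tm 1 (c, ls, x # X) (append_then a c', 0 # ls, X)"
    using assms by (intro reaches_step_right) auto
  also have "reaches reduction_tm (2 * length X + 3) \<dots> (c', 0 # ls, X @ [a])"
    using assms reaches_append_return[of c' a "[]" X ls] by simp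
  finally show ?thesis
    by (rule reaches_mono) (use assms in simp)
qed

lemma queue_pop_push:
  assumes "c \<noteq> 1" "machine_delta c x = (append_then a c', 0, Rgt)" "c' < n_ctrl" "1 \<le> a" "a \<le> 4"
    and "0 \<notin> set X" "length X < n"
  shows "queue_reaches (2 * n + 10) (c, x # X) (c', X @ [a])"
  unfolding queue_reaches_iff
proof (intro allI impI exI conjI)
  fix z :: "nat list"
  show "reaches reduction_tm (2 * n + 10) (c, 0 # z, x # X) (c', 0 # 0 # z, X @ [a])"
    by (rule reaches_pop_push[OF assms])
qed auto

lemma queue_scan_push:
  assumes scan: "scans c pre cc"
    and "cc \<noteq> 1" "machine_delta cc x = (append_then a c', x, Stay)" "c' < n_ctrl" "1 \<le> a" "a \<le> 4"
    and "x \<noteq> 0" "0 \<notin> set pre" "0 \<notin> set X" "length pre + length X + 2 \<le> n"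
  shows "queue_reaches (2 * n + 10) (c, pre @ x # X) (c', pre @ x # X @ [a])"
  unfolding queue_reaches_iff
proof (intro allI impI exI conjI)
  fix z :: "nat list"
  have "reaches reduction_tm (length pre) (c, 0 # z, pre @ x # X) (cc, rev pre @ 0 # z, x # X)"
    using scan unfolding scans_def by blast
  also have "reaches reduction_tm 1 \<dots> (append_then a c', rev pre @ 0 # z, x # X)"
    using assms by (intro reaches_step_stay) auto
  also have "reaches reduction_tm (length pre + 2 * length X + 5) \<dots> (c', 0 # z, pre @ x # X @ [a])"
    using assms reaches_append_return[of c' a pre "x # X" z] by (simp add: algebra_simps)
  finally show "reaches reduction_tm (2 * n + 10) (c, 0 # z, pre @ x # X) (c', 0 # z, pre @ x # X @ [a])"
    by (rule reaches_mono) (use assms in simp)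
qed auto

lemma queue_scan_mark_push:
  assumes scan: "scans c pre cc"
    and "cc \<noteq> 1" "machine_delta cc x = (append_then a c', m, Rgt)" "c' < n_ctrl" "1 \<le> a" "a \<le> 4"
    and "m \<noteq> 0" "0 \<notin> set pre" "0 \<notin> set X" "length pre + length X + 2 \<le> n"
  shows "queue_reaches (2 * n + 10) (c, pre @ x # X) (c', pre @ m # X @ [a])"
  unfolding queue_reaches_iff
proof (intro allI impI exI conjI)
  fix z :: "nat list"
  have "reaches reduction_tm (length pre) (c, 0 # z, pre @ x # X) (cc, rev pre @ 0 # z, x # X)"
    using scan unfolding scans_def by blast
  also have "reaches reduction_tm 1 \<dots> (append_then a c', m # rev pre @ 0 # z, X)"
    using assms by (intro reaches_step_right) auto
  also have "reaches reduction_tm (length pre + 2 * length X + 4) \<dots> (c', 0 # z, pre @ m # X @ [a])"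
    using assms reaches_append_return[of c' a "pre @ [m]" X z] by (simp add: algebra_simps)
  finally show "reaches reduction_tm (2 * n + 10) (c, 0 # z, pre @ x # X) (c', 0 # z, pre @ m # X @ [a])"
    by (rule reaches_mono) (use assms in simp)
qed auto

lemma queue_push:
  assumes "\<forall>x. machine_delta c x = (append_then a c', x, Stay)" "c \<noteq> 1" "c' < n_ctrl" "1 \<le> a" "a \<le> 4"
    and "X \<noteq> []" "0 \<notin> set X" "length X < n"
  shows "queue_reaches (2 * n + 10) (c, X) (c', X @ [a])"
  using assms queue_scan_push[where pre = "[]" and x = "hd X" and X = "tl X" and cc = c] scans_Nil
  by (cases X) (auto intro!: gr0I)

lemma queue_copy_marking:
  assumes prefix: "scans c P cc" and marks: "machine_delta cc m = (cc, m, Rgt)"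
    and "cc \<noteq> 1" "machine_delta cc x = (append_then 1 c, m, Rgt)" "c < n_ctrl"
    and "m \<noteq> 0" "x \<noteq> 0" "0 \<notin> set P" "0 \<notin> set T" "length P + 2 * j + length T \<le> n"
  shows "queue_reaches (j * (2 * n + 10))
    (c, P @ replicate j x @ T) (c, P @ replicate j m @ T @ replicate j 1)"
proof -
  have "queue_reaches (j * (2 * n + 10))
      (c, P @ replicate i m @ replicate j x @ T) (c, P @ replicate (i + j) m @ T @ replicate j 1)"
    if "0 \<notin> set T" "length P + i + 2 * j + length T \<le> n" for i T
    using that
  proof (induction j arbitrary: i T)
    case 0
    then show ?case by (simp add: queue_reaches_refl)
  next
    case (Suc j)
    have "queue_reaches (2 * n + 10)
        (c, (P @ replicate i m) @ x # replicate j x @ T)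
        (c, (P @ replicate i m) @ m # (replicate j x @ T) @ [1])"
      using Suc.prems assms scans_append[OF prefix scans_replicate[OF \<open>cc \<noteq> 1\<close> marks]]
      by (intro queue_scan_mark_push[where cc = cc]) auto
    also have "queue_reaches (j * (2 * n + 10)) \<dots>
        (c, P @ replicate (Suc i + j) m @ (T @ [1]) @ replicate j 1)"
      using Suc.IH[of "T @ [1]" "Suc i"] Suc.prems by (simp add: replicate_app_Cons_same)
    finally show ?case
      by (simp add: replicate_app_Cons_same add.commute)
  qed
  from this[of T 0] show ?thesis
    using assms by simp
qed

lemma queue_erase_through:
  assumes "c \<noteq> 1" "\<forall>y\<in>set E. machine_delta c y = (c, 0, Rgt)" "machine_delta c 4 = (c', 0, Rgt)"
  shows "queue_reaches (length E + 1) (c, E @ 4 # Y) (c', Y)"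
  unfolding queue_reaches_iff
proof (intro allI impI)
  fix z :: "nat list" assume z: "set z \<subseteq> {0}"
  have "reaches reduction_tm (length E) (c, 0 # z, E @ 4 # Y) (c, replicate (length E) 0 @ 0 # z, 4 # Y)"
    using assms by (intro reaches_erase_right) auto
  also have "reaches reduction_tm 1 \<dots> (c', 0 # replicate (length E) 0 @ 0 # z, Y)"
    using assms by (intro reaches_step_right) auto
  finally show "\<exists>z'. set z' \<subseteq> {0} \<and>
      reaches reduction_tm (length E + 1) (c, 0 # z, E @ 4 # Y) (c', 0 # z', Y)"
    using z by (intro exI[of _ "replicate (length E) 0 @ 0 # z"]) auto
qed

section \<open>Running the machine on encoded graphs\<close>

definition edge_obj :: "nat \<times> nat \<Rightarrow> obj" where
  "edge_obj = (\<lambda>(u, v). L [N u, N v])"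

definition enc_edges :: "(nat \<times> nat) list \<Rightarrow> nat list" where
  "enc_edges es = concat (map (enc \<circ> edge_obj) es)"

definition enc_lits :: "lit list \<Rightarrow> nat list" where
  "enc_lits ls = concat (map (enc \<circ> lit_obj) ls)"

lemma enc_nonblank: "0 \<notin> set (enc x)"
  by (induction x) auto

lemma enc_edges_simps [simp]:
  "enc_edges [] = []" "enc_edges (e # es) = enc (edge_obj e) @ enc_edges es"
  by (simp_all add: enc_edges_def)

lemma enc_edges_nonblank: "0 \<notin> set (enc_edges es)"
  by (auto simp: enc_edges_def enc_nonblank)

lemma enc_lits_append [simp]: "enc_lits (ls @ ls') = enc_lits ls @ enc_lits ls'"
  by (simp add: enc_lits_def)

lemma enc_lits_nonblank: "0 \<notin> set (enc_lits ls)"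
  by (auto simp: enc_lits_def enc_nonblank)

lemma enc_graph_obj:
  "enc (graph_obj g) = 3 # replicate (fst g) 1 @ [2, 3] @ enc_edges (snd g) @ [4, 4]"
  by (simp add: graph_obj_def edge_obj_def enc_edges_def)

lemma enc_hyp_obj_graph_rule:
  "enc (hyp_obj [graph_rule_code g]) =
     [3, 3, 3] @ replicate (fst g) 1 @ [2, 3, 4, 4, 3] @ enc_lits (concat (map edge_lits (snd g)))
       @ [4, 4, 4]"
  by (simp add: hyp_obj_def rule_obj_def graph_rule_code_def lit_obj_def enc_lits_def)

lemma enc_edge_obj: "enc (edge_obj (u, v)) = 3 # replicate u 1 @ 2 # replicate v 1 @ [2, 4]"
  by (simp add: edge_obj_def)

lemma enc_lits_edge_lits:
  "enc_lits (edge_lits (u, v)) =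
     [3, 2, 3] @ replicate u 1 @ 2 # replicate v 1 @ [2, 4, 4,
      3, 2, 3] @ replicate v 1 @ 2 # replicate u 1 @ [2, 4, 4]"
  by (simp add: enc_lits_def edge_lits_def lit_obj_def)

lemma queue_edge_open:
  assumes "0 \<notin> set T" "length T + 3 \<le> n"
  shows "queue_reaches (3 * (2 * n + 10)) (5, 3 # T) (6, T @ [3, 2, 3])"
proof -
  have "queue_reaches (2 * n + 10) (5, 3 # T) (25, T @ [3])"
    using assms by (intro queue_pop_push) (auto simp: ctrl_delta_simps)
  also have "queue_reaches (2 * n + 10) \<dots> (26, T @ [3, 2])"
    using assms queue_push[of 25 2 26 "T @ [3]" n] by (simp add: ctrl_delta_simps)
  also have "queue_reaches (2 * n + 10) \<dots> (6, T @ [3, 2, 3])"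
    using assms queue_push[of 26 3 6 "T @ [3, 2]" n] by (simp add: ctrl_delta_simps)
  finally show ?thesis
    by simp
qed

(* An edge (u, v) is turned into the atoms e(u, v), e(v, u) by copying u, v with mark 5, then v, u
   again re-marking them with 6 and 7, and finally erasing the marked edge. *)
lemma queue_edge_copy_forward:
  assumes "0 \<notin> set Y" "2 * u + 2 * v + length Y + 4 \<le> n"
  shows "queue_reaches ((u + v + 2) * (2 * n + 10))
    (6, replicate u 1 @ 2 # replicate v 1 @ 2 # Y)
    (29, replicate u 5 @ 2 # replicate v 5 @ 2 # Y @ replicate u 1 @ 2 # replicate v 1 @ [2])"
proof -
  have "queue_reaches (u * (2 * n + 10))
      (6, replicate u 1 @ 2 # replicate v 1 @ 2 # Y)
      (6, replicate u 5 @ 2 # replicate v 1 @ 2 # Y @ replicate u 1)"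
    using queue_copy_marking[where c = 6 and P = "[]" and cc = 6 and m = 5 and x = 1 and j = u
        and T = "2 # replicate v 1 @ 2 # Y" and n = n] assms scans_Nil
    by (simp add: ctrl_delta_simps)
  also have "queue_reaches (2 * n + 10) \<dots>
      (7, replicate u 5 @ 2 # replicate v 1 @ 2 # Y @ replicate u 1 @ [2])"
    using queue_scan_push[where c = 6 and pre = "replicate u 5" and cc = 6 and x = 2
        and X = "replicate v 1 @ 2 # Y @ replicate u 1" and a = 2 and c' = 7 and n = n]
      assms scans_replicate[of 6 5 u]
    by (simp add: ctrl_delta_simps)
  also have "queue_reaches (v * (2 * n + 10)) \<dots>
      (7, replicate u 5 @ 2 # replicate v 5 @ 2 # Y @ replicate u 1 @ 2 # replicate v 1)"
    using queue_copy_marking[where c = 7 and P = "replicate u 5 @ [2]" and cc = 8 and m = 5 and x = 1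
        and j = v and T = "2 # Y @ replicate u 1 @ [2]" and n = n]
      assms scans_append[OF scans_replicate[of 7 5 u] scans_single[of 7 2 8]]
    by (simp add: ctrl_delta_simps)
  also have "queue_reaches (2 * n + 10) \<dots>
      (29, replicate u 5 @ 2 # replicate v 5 @ 2 # Y @ replicate u 1 @ 2 # replicate v 1 @ [2])"
    using queue_scan_push[where c = 7 and pre = "replicate u 5 @ 2 # replicate v 5" and cc = 8 and x = 2
        and X = "Y @ replicate u 1 @ 2 # replicate v 1" and a = 2 and c' = 29 and n = n]
      assms scans_append[OF scans_append[OF scans_replicate[of 7 5 u] scans_single[of 7 2 8]]
        scans_replicate[of 8 5 v]]
    by (simp add: ctrl_delta_simps)
  finally show ?thesis
    by (simp add: algebra_simps)
qed

lemma queue_edge_separator: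
  assumes "X \<noteq> []" "0 \<notin> set X" "length X + 5 \<le> n"
  shows "queue_reaches (5 * (2 * n + 10)) (29, X) (9, X @ [4, 4, 3, 2, 3])"
proof -
  have "queue_reaches (2 * n + 10) (29, X) (30, X @ [4])"
    using assms queue_push[of 29 4 30 X n] by (simp add: ctrl_delta_simps)
  also have "queue_reaches (2 * n + 10) \<dots> (31, X @ [4, 4])"
    using assms queue_push[of 30 4 31 "X @ [4]" n] by (simp add: ctrl_delta_simps)
  also have "queue_reaches (2 * n + 10) \<dots> (32, X @ [4, 4, 3])"
    using assms queue_push[of 31 3 32 "X @ [4, 4]" n] by (simp add: ctrl_delta_simps)
  also have "queue_reaches (2 * n + 10) \<dots> (33, X @ [4, 4, 3, 2])"
    using assms queue_push[of 32 2 33 "X @ [4, 4, 3]" n] by (simp add: ctrl_delta_simps)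
  also have "queue_reaches (2 * n + 10) \<dots> (9, X @ [4, 4, 3, 2, 3])"
    using assms queue_push[of 33 3 9 "X @ [4, 4, 3, 2]" n] by (simp add: ctrl_delta_simps)
  finally show ?thesis
    by simp
qed

lemma queue_edge_copy_backward:
  assumes "0 \<notin> set Y" "2 * u + 2 * v + length Y + 6 \<le> n"
  shows "queue_reaches ((u + v + 4) * (2 * n + 10))
    (9, replicate u 5 @ 2 # replicate v 5 @ 2 # Y)
    (12, replicate u 7 @ 2 # replicate v 6 @ 2 # Y @ replicate v 1 @ 2 # replicate u 1 @ [2, 4, 4])"
proof -
  have scan9: "scans 9 (replicate u 5 @ [2]) 10"
    using scans_append[OF scans_replicate[of 9 5 u] scans_single[of 9 2 10]]
    by (simp add: ctrl_delta_simps)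
  have "queue_reaches (v * (2 * n + 10))
      (9, replicate u 5 @ 2 # replicate v 5 @ 2 # Y)
      (9, replicate u 5 @ 2 # replicate v 6 @ 2 # Y @ replicate v 1)"
    using queue_copy_marking[where c = 9 and P = "replicate u 5 @ [2]" and cc = 10 and m = 6 and x = 5
        and j = v and T = "2 # Y" and n = n] assms scan9
    by (simp add: ctrl_delta_simps)
  also have "queue_reaches (2 * n + 10) \<dots>
      (11, replicate u 5 @ 2 # replicate v 6 @ 2 # Y @ replicate v 1 @ [2])"
    using queue_scan_push[where c = 9 and pre = "replicate u 5 @ 2 # replicate v 6" and cc = 10 and x = 2
        and X = "Y @ replicate v 1" and a = 2 and c' = 11 and n = n]
      assms scans_append[OF scan9 scans_replicate[of 10 6 v]]
    by (simp add: ctrl_delta_simps)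
  also have "queue_reaches (u * (2 * n + 10)) \<dots>
      (11, replicate u 7 @ 2 # replicate v 6 @ 2 # Y @ replicate v 1 @ 2 # replicate u 1)"
    using queue_copy_marking[where c = 11 and P = "[]" and cc = 11 and m = 7 and x = 5 and j = u
        and T = "2 # replicate v 6 @ 2 # Y @ replicate v 1 @ [2]" and n = n] assms scans_Nil
    by (simp add: ctrl_delta_simps)
  also have "queue_reaches (2 * n + 10) \<dots>
      (34, replicate u 7 @ 2 # replicate v 6 @ 2 # Y @ replicate v 1 @ 2 # replicate u 1 @ [2])"
    using queue_scan_push[where c = 11 and pre = "replicate u 7" and cc = 11 and x = 2
        and X = "replicate v 6 @ 2 # Y @ replicate v 1 @ 2 # replicate u 1" and a = 2 and c' = 34
        and n = n]
      assms scans_replicate[of 11 7 u]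
    by (simp add: ctrl_delta_simps)
  also have "queue_reaches (2 * n + 10) \<dots>
      (35, replicate u 7 @ 2 # replicate v 6 @ 2 # Y @ replicate v 1 @ 2 # replicate u 1 @ [2, 4])"
    using assms queue_push[of 34 4 35
        "replicate u 7 @ 2 # replicate v 6 @ 2 # Y @ replicate v 1 @ 2 # replicate u 1 @ [2]" n]
    by (simp add: ctrl_delta_simps)
  also have "queue_reaches (2 * n + 10) \<dots>
      (12, replicate u 7 @ 2 # replicate v 6 @ 2 # Y @ replicate v 1 @ 2 # replicate u 1 @ [2, 4, 4])"
    using assms queue_push[of 35 4 12
        "replicate u 7 @ 2 # replicate v 6 @ 2 # Y @ replicate v 1 @ 2 # replicate u 1 @ [2, 4]" n]
    by (simp add: ctrl_delta_simps)
  finally show ?thesis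
    by (simp add: algebra_simps)
qed

lemma queue_edge_erase:
  "queue_reaches (u + v + 3) (12, replicate u 7 @ 2 # replicate v 6 @ 2 # 4 # Y) (5, Y)"
proof -
  have "queue_reaches (length (replicate u (7::nat) @ 2 # replicate v 6 @ [2]) + 1)
      (12, (replicate u 7 @ 2 # replicate v 6 @ [2]) @ 4 # Y) (5, Y)"
    by (rule queue_erase_through) (auto simp: ctrl_delta_simps)
  then show ?thesis
    by (simp add: numeral_3_eq_3)
qed

lemma queue_edge:
  assumes "0 \<notin> set Y"
    and "length (enc (edge_obj e)) + length Y + length (enc_lits (edge_lits e)) \<le> n"
  shows "queue_reaches ((length (enc (edge_obj e)) + length (enc_lits (edge_lits e))) * (2 * n + 10))
    (5, enc (edge_obj e) @ Y) (5, Y @ enc_lits (edge_lits e))"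
proof -
  obtain u v where e: "e = (u, v)"
    by (cases e)
  let ?U = "2 * n + 10"
  let ?first = "replicate u 1 @ 2 # replicate v 1 @ [2]"
  let ?second = "replicate v 1 @ 2 # replicate u 1 @ [2, 4, 4]"
  have len: "3 * u + 3 * v + 18 + length Y \<le> n"
    using assms(2) by (simp add: e enc_edge_obj enc_lits_edge_lits)
  have "queue_reaches (3 * ?U)
      (5, 3 # replicate u 1 @ 2 # replicate v 1 @ 2 # 4 # Y)
      (6, replicate u 1 @ 2 # replicate v 1 @ 2 # 4 # Y @ [3, 2, 3])"
    using assms(1) len queue_edge_open[of "replicate u 1 @ 2 # replicate v 1 @ 2 # 4 # Y" n] by simp
  also have "queue_reaches ((u + v + 2) * ?U) \<dots>
      (29, replicate u 5 @ 2 # replicate v 5 @ 2 # 4 # Y @ [3, 2, 3] @ ?first)"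
    using assms(1) len queue_edge_copy_forward[of "4 # Y @ [3, 2, 3]" u v n] by simp
  also have "queue_reaches (5 * ?U) \<dots>
      (9, replicate u 5 @ 2 # replicate v 5 @ 2 # 4 # Y @ [3, 2, 3] @ ?first @ [4, 4, 3, 2, 3])"
    using assms(1) len
      queue_edge_separator[of "replicate u 5 @ 2 # replicate v 5 @ 2 # 4 # Y @ [3, 2, 3] @ ?first" n]
    by simp
  also have "queue_reaches ((u + v + 4) * ?U) \<dots>
      (12, replicate u 7 @ 2 # replicate v 6 @ 2 # 4 # Y @ [3, 2, 3] @ ?first @ [4, 4, 3, 2, 3] @ ?second)"
    using assms(1) len queue_edge_copy_backward[of "4 # Y @ [3, 2, 3] @ ?first @ [4, 4, 3, 2, 3]" u v n]
    by simp
  also have "queue_reaches (u + v + 3) \<dots> (5, Y @ [3, 2, 3] @ ?first @ [4, 4, 3, 2, 3] @ ?second)"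
    by (rule queue_edge_erase)
  finally have "queue_reaches ((3 * u + 3 * v + 18) * ?U)
      (5, 3 # replicate u 1 @ 2 # replicate v 1 @ 2 # 4 # Y)
      (5, Y @ [3, 2, 3] @ ?first @ [4, 4, 3, 2, 3] @ ?second)"
    by (rule queue_reaches_mono) (simp add: algebra_simps)
  moreover have lens: "length (enc (edge_obj e)) + length (enc_lits (edge_lits e)) = 3 * u + 3 * v + 18"
    by (simp add: e enc_edge_obj enc_lits_edge_lits)
  ultimately show ?thesis
    unfolding lens by (simp add: e enc_edge_obj enc_lits_edge_lits)
qed

lemma queue_edges:
  assumes "0 \<notin> set Y"
    and "length (enc_edges es) + length Y
           + length (enc_lits (concat (map edge_lits es))) \<le> n"
  shows "queue_reaches
    ((length (enc_edges es) + length (enc_lits (concat (map edge_lits es))))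
       * (2 * n + 10))
    (5, enc_edges es @ Y) (5, Y @ enc_lits (concat (map edge_lits es)))"
  using assms
proof (induction es arbitrary: Y)
  case Nil
  then show ?case
    by (simp add: enc_lits_def queue_reaches_refl)
next
  case (Cons e es)
  have "queue_reaches ((length (enc (edge_obj e)) + length (enc_lits (edge_lits e))) * (2 * n + 10))
      (5, enc (edge_obj e) @ enc_edges es @ Y)
      (5, enc_edges es @ Y @ enc_lits (edge_lits e))"
    using Cons.prems queue_edge[of "enc_edges es @ Y" e n] by (simp add: enc_edges_nonblank)
  also have "queue_reaches
      ((length (enc_edges es) + length (enc_lits (concat (map edge_lits es))))
         * (2 * n + 10)) \<dots>
      (5, (Y @ enc_lits (edge_lits e)) @ enc_lits (concat (map edge_lits es)))"
    using Cons.prems Cons.IH[of "Y @ enc_lits (edge_lits e)"] by (simp add: enc_lits_nonblank)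
  finally show ?case
    by (simp add: algebra_simps)
qed

lemma queue_copy_count:
  assumes "0 \<notin> set X" "length X + k \<le> n"
  shows "queue_reaches (k * (2 * n + 10)) (3, replicate k 1 @ X) (3, X @ replicate k 1)"
  using assms
proof (induction k arbitrary: X)
  case 0
  then show ?case by (simp add: queue_reaches_refl)
next
  case (Suc k)
  have "queue_reaches (2 * n + 10) (3, 1 # replicate k 1 @ X) (3, (replicate k 1 @ X) @ [1])"
    using Suc.prems by (intro queue_pop_push) (auto simp: ctrl_delta_simps)
  also have "queue_reaches (k * (2 * n + 10)) \<dots> (3, (X @ [1]) @ replicate k 1)"
    using Suc.prems Suc.IH[of "X @ [1]"] by simp
  finally show ?case
    by (simp add: replicate_app_Cons_same)
qed

lemma queue_graph_open:
  assumes "0 \<notin> set T" "length T + 2 * k + 11 \<le> n"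
  shows "queue_reaches ((k + 8) * (2 * n + 10))
    (2, 3 # replicate k 1 @ 2 # 3 # T) (5, T @ [3, 3, 3] @ replicate k 1 @ [2, 3, 4, 4, 3])"
proof -
  let ?U = "2 * n + 10"
  have "queue_reaches ?U (2, 3 # replicate k 1 @ 2 # 3 # T) (20, replicate k 1 @ 2 # 3 # T @ [3])"
    using assms queue_pop_push[of 2 3 3 20 "replicate k 1 @ 2 # 3 # T" n]
    by (simp add: ctrl_delta_simps)
  also have "queue_reaches ?U \<dots> (21, replicate k 1 @ 2 # 3 # T @ [3, 3])"
    using assms queue_push[of 20 3 21 "replicate k 1 @ 2 # 3 # T @ [3]" n]
    by (simp add: ctrl_delta_simps)
  also have "queue_reaches ?U \<dots> (3, replicate k 1 @ 2 # 3 # T @ [3, 3, 3])"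
    using assms queue_push[of 21 3 3 "replicate k 1 @ 2 # 3 # T @ [3, 3]" n]
    by (simp add: ctrl_delta_simps)
  also have "queue_reaches (k * ?U) \<dots> (3, 2 # 3 # T @ [3, 3, 3] @ replicate k 1)"
    using assms queue_copy_count[of "2 # 3 # T @ [3, 3, 3]" k n] by simp
  also have "queue_reaches ?U \<dots> (22, 3 # T @ [3, 3, 3] @ replicate k 1 @ [2])"
    using assms queue_pop_push[of 3 2 2 22 "3 # T @ [3, 3, 3] @ replicate k 1" n]
    by (simp add: ctrl_delta_simps)
  also have "queue_reaches ?U \<dots> (23, 3 # T @ [3, 3, 3] @ replicate k 1 @ [2, 3])"
    using assms queue_push[of 22 3 23 "3 # T @ [3, 3, 3] @ replicate k 1 @ [2]" n]
    by (simp add: ctrl_delta_simps)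
  also have "queue_reaches ?U \<dots> (24, 3 # T @ [3, 3, 3] @ replicate k 1 @ [2, 3, 4])"
    using assms queue_push[of 23 4 24 "3 # T @ [3, 3, 3] @ replicate k 1 @ [2, 3]" n]
    by (simp add: ctrl_delta_simps)
  also have "queue_reaches ?U \<dots> (4, 3 # T @ [3, 3, 3] @ replicate k 1 @ [2, 3, 4, 4])"
    using assms queue_push[of 24 4 4 "3 # T @ [3, 3, 3] @ replicate k 1 @ [2, 3, 4]" n]
    by (simp add: ctrl_delta_simps)
  also have "queue_reaches ?U \<dots> (5, T @ [3, 3, 3] @ replicate k 1 @ [2, 3, 4, 4, 3])"
    using assms queue_pop_push[of 4 3 3 5 "T @ [3, 3, 3] @ replicate k 1 @ [2, 3, 4, 4]" n]
    by (simp add: ctrl_delta_simps)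
  finally show ?thesis
    by (simp add: algebra_simps)
qed

lemma queue_graph_close:
  assumes "0 \<notin> set T" "length T + 3 \<le> n"
  shows "queue_reaches (3 * (2 * n + 10)) (5, 4 # 4 # T) (2, T @ [4, 4, 4])"
proof -
  have "queue_reaches (2 * n + 10) (5, 4 # 4 # T) (27, 4 # T @ [4])"
    using assms queue_pop_push[of 5 4 4 27 "4 # T" n] by (simp add: ctrl_delta_simps)
  also have "queue_reaches (2 * n + 10) \<dots> (28, 4 # T @ [4, 4])"
    using assms queue_push[of 27 4 28 "4 # T @ [4]" n] by (simp add: ctrl_delta_simps)
  also have "queue_reaches (2 * n + 10) \<dots> (2, T @ [4, 4, 4])"
    using assms queue_pop_push[of 28 4 4 2 "T @ [4, 4]" n] by (simp add: ctrl_delta_simps)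
  finally show ?thesis
    by simp
qed

lemma queue_graph:
  assumes "0 \<notin> set Y"
    and "length (enc (graph_obj g)) + length Y + length (enc (hyp_obj [graph_rule_code g])) \<le> n"
  shows "queue_reaches
    ((length (enc (graph_obj g)) + length (enc (hyp_obj [graph_rule_code g]))) * (2 * n + 10))
    (2, enc (graph_obj g) @ Y) (2, Y @ enc (hyp_obj [graph_rule_code g]))"
proof -
  obtain k es where g: "g = (k, es)"
    by (cases g)
  let ?U = "2 * n + 10"
  let ?E = "enc_edges es" and ?L = "enc_lits (concat (map edge_lits es))"
  have nonblank: "0 \<notin> set ?E" "0 \<notin> set ?L"
    by (simp_all add: enc_edges_nonblank enc_lits_nonblank)
  have len: "2 * k + length ?E + length Y + length ?L + 16 \<le> n"
    using assms(2) by (simp add: g enc_graph_obj enc_hyp_obj_graph_rule)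
  have "queue_reaches ((k + 8) * ?U)
      (2, 3 # replicate k 1 @ 2 # 3 # ?E @ 4 # 4 # Y)
      (5, ?E @ 4 # 4 # Y @ [3, 3, 3] @ replicate k 1 @ [2, 3, 4, 4, 3])"
    using assms(1) nonblank len queue_graph_open[of "?E @ 4 # 4 # Y" k n] by simp
  also have "queue_reaches ((length ?E + length ?L) * ?U) \<dots>
      (5, 4 # 4 # Y @ [3, 3, 3] @ replicate k 1 @ [2, 3, 4, 4, 3] @ ?L)"
    using assms(1) nonblank len
      queue_edges[of "4 # 4 # Y @ [3, 3, 3] @ replicate k 1 @ [2, 3, 4, 4, 3]" es n]
    by simp
  also have "queue_reaches (3 * ?U) \<dots> (2, Y @ [3, 3, 3] @ replicate k 1 @ [2, 3, 4, 4, 3] @ ?L @ [4, 4, 4])"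
    using assms(1) nonblank len
      queue_graph_close[of "Y @ [3, 3, 3] @ replicate k 1 @ [2, 3, 4, 4, 3] @ ?L" n]
    by simp
  finally have "queue_reaches ((2 * k + length ?E + length ?L + 16) * ?U)
      (2, 3 # replicate k 1 @ 2 # 3 # ?E @ 4 # 4 # Y)
      (2, Y @ [3, 3, 3] @ replicate k 1 @ [2, 3, 4, 4, 3] @ ?L @ [4, 4, 4])"
    by (rule queue_reaches_mono) (simp add: algebra_simps)
  moreover have lens: "length (enc (graph_obj g)) + length (enc (hyp_obj [graph_rule_code g])) =
      2 * k + length ?E + length ?L + 16"
    by (simp add: g enc_graph_obj enc_hyp_obj_graph_rule)
  ultimately show ?thesis
    unfolding lens by (simp add: g enc_graph_obj enc_hyp_obj_graph_rule)
qed

lemma length_enc_hyp_obj_graph_rule: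
  "length (enc (hyp_obj [graph_rule_code g])) \<le> 4 * length (enc (graph_obj g))"
proof -
  have "length (enc_lits (concat (map edge_lits es))) \<le> 4 * length (enc_edges es)"
    for es
  proof (induction es)
    case Nil
    then show ?case by (simp add: enc_lits_def)
  next
    case (Cons e es)
    then show ?case
      by (cases e) (simp add: enc_edge_obj enc_lits_edge_lits)
  qed
  from this[of "snd g"] show ?thesis
    by (simp add: enc_graph_obj enc_hyp_obj_graph_rule)
qed

lemma computes_within_if_reaches:
  assumes "reaches M B (0, [], w) (1, ls, out)" "set ls \<subseteq> {0}" "B \<le> T"
  shows "computes_within M T w out"
proof -
  obtain t k where "t \<le> B" "run M t (0, [], w) = (1, ls, out @ replicate k 0)"
    using assms(1) unfolding reaches_def by (metis append_Nil2 pad_blanks.simps replicate_0)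
  with assms(2,3) show ?thesis
    unfolding computes_within_def by (intro exI[of _ t]) auto
qed

lemma reduction_tm_reaches:
  fixes g1 g2 :: graph_code and n :: nat
  defines "w \<equiv> enc (L [graph_obj g1, graph_obj g2])"
    and "out \<equiv> enc (L [hyp_obj [graph_rule_code g1], hyp_obj [graph_rule_code g2]])"
  assumes n: "n = length w + length out"
  shows "\<exists>z. set z \<subseteq> {0} \<and> reaches reduction_tm (n * (2 * n + 10)) (0, [], w) (1, 0 # z, out)"
proof -
  let ?G1 = "enc (graph_obj g1)" and ?G2 = "enc (graph_obj g2)"
  let ?H1 = "enc (hyp_obj [graph_rule_code g1])" and ?H2 = "enc (hyp_obj [graph_rule_code g2])"
  let ?U = "2 * n + 10"
  have w: "w = 3 # ?G1 @ ?G2 @ [4]" and out: "out = 3 # ?H1 @ ?H2 @ [4]"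
    by (simp_all add: w_def out_def)
  have nonblank: "0 \<notin> set ?G1" "0 \<notin> set ?G2" "0 \<notin> set ?H1" "0 \<notin> set ?H2"
    by (simp_all add: enc_nonblank)
  have len: "length ?G1 + length ?H1 + (length ?G2 + length ?H2) + 4 = n"
    by (simp add: n w out)
  have start: "reaches reduction_tm ?U (0, [], w) (2, [0], ?G1 @ ?G2 @ [4, 3])"
    using reaches_pop_push[of 0 3 3 2 "?G1 @ ?G2 @ [4]" n "[]"] nonblank len
    by (simp add: w ctrl_delta_simps)
  have "queue_reaches ((length ?G1 + length ?H1) * ?U) (2, ?G1 @ ?G2 @ [4, 3]) (2, ?G2 @ [4, 3] @ ?H1)"
    using queue_graph[of "?G2 @ [4, 3]" g1 n] nonblank len by simp
  also have "queue_reaches ((length ?G2 + length ?H2) * ?U) \<dots> (2, [4, 3] @ ?H1 @ ?H2)"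
    using queue_graph[of "[4, 3] @ ?H1" g2 n] nonblank len by simp
  also have "queue_reaches ?U \<dots> (1, out)"
    using queue_pop_push[of 2 4 4 1 "3 # ?H1 @ ?H2" n] nonblank len
    by (simp add: out ctrl_delta_simps)
  finally obtain z where z: "set z \<subseteq> {0}" and rest: "reaches reduction_tm
      ((length ?G1 + length ?H1) * ?U + (length ?G2 + length ?H2) * ?U + ?U)
      (2, [0], ?G1 @ ?G2 @ [4, 3]) (1, 0 # z, out)"
    unfolding queue_reaches_iff by (metis empty_set empty_subsetI)
  have "?U + ((length ?G1 + length ?H1) * ?U + (length ?G2 + length ?H2) * ?U + ?U) =
      (length ?G1 + length ?H1 + (length ?G2 + length ?H2) + 2) * ?U"
    by (simp add: algebra_simps)
  also have "\<dots> \<le> n * ?U"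
    using len by (intro mult_le_mono1) simp
  finally have "?U + ((length ?G1 + length ?H1) * ?U + (length ?G2 + length ?H2) * ?U + ?U) \<le> n * ?U" .
  with reaches_trans[OF start rest] z show ?thesis
    by (blast intro: reaches_mono)
qed

lemma reduction_tm_computes:
  fixes g1 g2 :: graph_code
  defines "w \<equiv> enc (L [graph_obj g1, graph_obj g2])"
  shows "computes_within reduction_tm (50 * (length w + 1) ^ 2) w
    (enc (L [hyp_obj [graph_rule_code g1], hyp_obj [graph_rule_code g2]]))"
proof -
  let ?out = "enc (L [hyp_obj [graph_rule_code g1], hyp_obj [graph_rule_code g2]])"
  define n where "n = length w + length ?out"
  obtain z where z: "set z \<subseteq> {0}"
    and run: "reaches reduction_tm (n * (2 * n + 10)) (0, [], w) (1, 0 # z, ?out)"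
    using reduction_tm_reaches[of n g1 g2] unfolding w_def n_def by blast
  have "n \<le> 5 * length w"
    using length_enc_hyp_obj_graph_rule[of g1] length_enc_hyp_obj_graph_rule[of g2]
    by (simp add: n_def w_def)
  then have "n * (2 * n + 10) \<le> (5 * length w) * (10 * length w + 10)"
    by (intro mult_mono) auto
  also have "\<dots> \<le> 50 * (length w + 1) ^ 2"
    by (simp add: power2_eq_square algebra_simps)
  finally show ?thesis
    using z by (intro computes_within_if_reaches[OF run]) auto
qed

theorem mainTheorem2:
  shows "\<exists>M c k. wf_tm M \<and>
    (\<forall>g1 g2. valid_graph g1 \<and> valid_graph g2 \<longrightarrow>
      (let w = enc (L [graph_obj g1, graph_obj g2]) in
       \<exists>rs1 rs2.
         computes_within M (c * (length w + 1) ^ k) w (enc (L [hyp_obj rs1, hyp_obj rs2])) \<and>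
         (graph_iso g1 g2 \<longleftrightarrow> hyp_variants (to_hyp rs1) (to_hyp rs2))))"
proof -
  have "\<forall>g1 g2. valid_graph g1 \<and> valid_graph g2 \<longrightarrow>
      (let w = enc (L [graph_obj g1, graph_obj g2]) in
       \<exists>rs1 rs2.
         computes_within reduction_tm (50 * (length w + 1) ^ 2) w (enc (L [hyp_obj rs1, hyp_obj rs2])) \<and>
         (graph_iso g1 g2 \<longleftrightarrow> hyp_variants (to_hyp rs1) (to_hyp rs2)))"
    unfolding Let_def using reduction_tm_computes graph_iso_iff_hyp_variants by blast
  with wf_reduction_tm show ?thesis
    by blast
qed

end
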